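(* Let $q$ be a prime power with $q>63$ and let $\mathbb D$ be a $3$-$(q+1,q-4,(q-4)(q-5)(q-6)/60)$ design. Then $\dim_q\mathbb D\ge 4$.
   Context: A $t$-$(v,k,\lambda)$ design is a set of $v$ points with a set of $k$-subsets (blocks) such that every $t$ points lie in exactly $\lambda>0$ blocks. The dimension $\dim_q\mathbb D$ of a design $\mathbb D$ over $\mathrm{GF}(q)$ is the minimum of the ranks over $\mathrm{GF}(q)$ of all matrices obtained from the $(0,1)$ block-by-point incidence matrix of $\mathbb D$ by replacing each entry $1$ with an arbitrary nonzero element of $\mathrm{GF}(q)$; equivalently, the minimum dimension of a linear code over $\mathrm{GF}(q)$ of length $v$ in which every block of $\mathbb D$ is the support of some codeword. *)

theory Defs
  imports Complex_Main "HOL-Library.Function_Algebras"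
begin

definition fscale :: "'F::field \<Rightarrow> ('a \<Rightarrow> 'F) \<Rightarrow> ('a \<Rightarrow> 'F)" where
  "fscale c f = (\<lambda>x. c * f x)"

lemma vector_space_fscale: "vector_space (fscale :: 'F::field \<Rightarrow> ('a \<Rightarrow> 'F) \<Rightarrow> _)"
  by unfold_locales (auto simp: fscale_def fun_eq_iff algebra_simps)

definition is_design :: "nat \<Rightarrow> nat \<Rightarrow> nat \<Rightarrow> nat \<Rightarrow> 'a set \<Rightarrow> 'a set set \<Rightarrow> bool" where
  "is_design t v k lam P B \<longleftrightarrow>
     finite P \<and> card P = v \<and> lam > 0 \<and>
     (\<forall>b\<in>B. b \<subseteq> P \<and> card b = k) \<and>
     (\<forall>T. T \<subseteq> P \<and> card T = t \<longrightarrow> card {b\<in>B. T \<subseteq> b} = lam)"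

definition supp :: "('a \<Rightarrow> 'F::zero) \<Rightarrow> 'a set" where
  "supp c = {x. c x \<noteq> 0}"

text \<open>Linear codes over 'F of length |P|: subspaces of the space of functions P -> 'F
  (functions vanishing outside P).\<close>
definition linear_code :: "'a set \<Rightarrow> ('a \<Rightarrow> 'F::field) set \<Rightarrow> bool" where
  "linear_code P C \<longleftrightarrow> module.subspace fscale C \<and> (\<forall>c\<in>C. supp c \<subseteq> P)"

definition design_dim :: "'F::field itself \<Rightarrow> 'a set \<Rightarrow> 'a set set \<Rightarrow> nat" where
  "design_dim _ P B = (LEAST d. \<exists>C :: ('a \<Rightarrow> 'F) set. linear_code P C \<and>
      vector_space.dim fscale C = d \<and> (\<forall>b\<in>B. \<exists>c\<in>C. supp c = b))"

end

theory Submission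
  imports Defs "HOL-Library.FuncSet"
begin

text \<open>
  Double counting the pairs (3-set, block containing it) shows that the design has
  \<open>(q+1)q(q-1)/60\<close> blocks. In a code over \<open>GF(q)\<close> realising the blocks as supports, the
  \<open>q-1\<close> nonzero multiples of a codeword with support \<open>b\<close> all have support \<open>b\<close>, so distinct
  blocks give \<open>|B|(q-1)\<close> distinct nonzero codewords. A code of dimension at most 3 has
  at most \<open>q\<^sup>3\<close> words, which forces \<open>|B| \<le> q\<^sup>2+q+1\<close>, impossible once \<open>q > 63\<close>.
\<close>

lemma six_mult_choose_three: "6 * (n choose 3) = n * (n - 1) * (n - 2)"
proof -
  have three: "3 * (n choose 3) = n * (n - 1 choose 2)"
    using binomial_absorption[of 2 n] by (simp add: numeral_3_eq_3)
  have two: "2 * (n - 1 choose 2) = (n - 1) * (n - 2)"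
    using binomial_absorption[of 1 "n - 1"] by (simp add: numeral_2_eq_2)
  have "6 * (n choose 3) = 2 * (3 * (n choose 3))" by simp
  also have "\<dots> = n * (2 * (n - 1 choose 2))" unfolding three by (simp only: mult.left_commute)
  also have "\<dots> = n * (n - 1) * (n - 2)" unfolding two by (simp only: mult.assoc)
  finally show ?thesis .
qed

lemma design_card_blocks:
  assumes "is_design t v k lam P B"
  shows "card B * (k choose t) = lam * (v choose t)"
proof -
  have fP: "finite P" and cP: "card P = v" and blocks: "\<And>b. b \<in> B \<Longrightarrow> b \<subseteq> P \<and> card b = k"
    and lam: "\<And>T. T \<subseteq> P \<Longrightarrow> card T = t \<Longrightarrow> card {b\<in>B. T \<subseteq> b} = lam"
    using assms unfolding is_design_def by auto
  have fB: "finite B" using blocks fP by (meson Pow_iff finite_Pow_iff rev_finite_subset subsetI)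
  define S where "S = {T. T \<subseteq> P \<and> card T = t}"
  have fS: "finite S" unfolding S_def using fP by auto
  have "card {T\<in>S. T \<subseteq> b} = k choose t" if "b \<in> B" for b
  proof -
    have "{T\<in>S. T \<subseteq> b} = {T. T \<subseteq> b \<and> card T = t}" using that blocks unfolding S_def by auto
    then show ?thesis using that blocks fP by (metis finite_subset n_subsets)
  qed
  then have "card B * (k choose t) = (\<Sum>b\<in>B. card {T\<in>S. T \<subseteq> b})" by simp
  also have "\<dots> = (\<Sum>b\<in>B. \<Sum>T\<in>S. if T \<subseteq> b then 1 else 0)"
    using fS by (simp add: sum.inter_filter[symmetric])
  also have "\<dots> = (\<Sum>T\<in>S. \<Sum>b\<in>B. if T \<subseteq> b then 1 else 0)" by (rule sum.swap)
  also have "\<dots> = (\<Sum>T\<in>S. card {b\<in>B. T \<subseteq> b})"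
    using fB by (simp add: sum.inter_filter[symmetric])
  also have "\<dots> = (\<Sum>T\<in>S. lam)" using lam unfolding S_def by simp
  also have "\<dots> = lam * (v choose t)" using fP cP by (simp add: S_def n_subsets)
  finally show ?thesis .
qed

lemma design_3_card_blocks:
  assumes "is_design 3 (q + 1) (q - 4) lam P B" and "60 * lam = (q - 4) * (q - 5) * (q - 6)"
  shows "60 * card B = (q + 1) * q * (q - 1)"
proof -
  have "card B * (6 * (q - 4 choose 3)) = lam * (6 * (q + 1 choose 3))"
    using design_card_blocks[OF assms(1)] by (metis mult.left_commute)
  then have "card B * ((q - 4) * (q - 5) * (q - 6)) = lam * ((q + 1) * q * (q - 1))"
    unfolding six_mult_choose_three by (simp add: numeral_eq_Suc)
  then have "lam * (60 * card B) = lam * ((q + 1) * q * (q - 1))"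
    using assms(2) by (metis mult.commute mult.left_commute)
  moreover have "lam > 0" using assms(1) unfolding is_design_def by simp
  ultimately show ?thesis by simp
qed

lemma finite_supp_subset:
  assumes "finite P" and "finite (UNIV :: 'F set)"
  shows "finite {f :: 'a \<Rightarrow> 'F::zero. supp f \<subseteq> P}"
proof -
  define ext :: "('a \<Rightarrow> 'F) \<Rightarrow> 'a \<Rightarrow> 'F" where "ext g x = (if x \<in> P then g x else 0)" for g x
  have "{f :: 'a \<Rightarrow> 'F. supp f \<subseteq> P} \<subseteq> ext ` (P \<rightarrow>\<^sub>E UNIV)"
  proof
    fix f :: "'a \<Rightarrow> 'F" assume "f \<in> {f. supp f \<subseteq> P}"
    then have "f = ext (restrict f P)" unfolding ext_def supp_def by (force simp: fun_eq_iff)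
    moreover have "restrict f P \<in> P \<rightarrow>\<^sub>E UNIV" by simp
    ultimately show "f \<in> ext ` (P \<rightarrow>\<^sub>E UNIV)" by (rule image_eqI)
  qed
  moreover have "finite (ext ` (P \<rightarrow>\<^sub>E UNIV))" using assms by (simp add: finite_PiE)
  ultimately show ?thesis by (rule finite_subset)
qed

lemma (in module) card_span_le:
  assumes "finite (UNIV :: 'a set)" and "finite S"
  shows "card (span S) \<le> card (UNIV :: 'a set) ^ card S"
proof -
  define comb where "comb u = (\<Sum>v\<in>S. scale (u v) v)" for u
  have "span S \<subseteq> comb ` (S \<rightarrow>\<^sub>E UNIV)"
  proof
    fix x assume "x \<in> span S"
    then obtain u where "x = comb u" using span_finite[OF assms(2)] unfolding comb_def by auto
    also have "\<dots> = comb (restrict u S)" unfolding comb_def by (intro sum.cong) auto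
    finally show "x \<in> comb ` (S \<rightarrow>\<^sub>E UNIV)" by auto
  qed
  then have "card (span S) \<le> card (comb ` (S \<rightarrow>\<^sub>E UNIV))"
    using assms by (intro card_mono) (auto simp: finite_PiE)
  also have "\<dots> \<le> card (S \<rightarrow>\<^sub>E (UNIV :: 'a set))"
    using assms by (intro card_image_le) (simp add: finite_PiE)
  also have "\<dots> = card (UNIV :: 'a set) ^ card S"
    using assms by (simp add: card_PiE)
  finally show ?thesis .
qed

lemma card_linear_code_le:
  fixes C :: "('a \<Rightarrow> 'F::{finite,field}) set"
  assumes "linear_code P C" and "finite P"
  shows "finite C" and "card C \<le> card (UNIV :: 'F set) ^ vector_space.dim fscale C"
proof -
  interpret V: vector_space "fscale :: 'F \<Rightarrow> ('a \<Rightarrow> 'F) \<Rightarrow> ('a \<Rightarrow> 'F)" by (rule vector_space_fscale)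
  have "C \<subseteq> {f. supp f \<subseteq> P}" using assms(1) unfolding linear_code_def by auto
  then show "finite C" using finite_supp_subset[OF assms(2) finite_UNIV] by (rule finite_subset)
  obtain W where W: "W \<subseteq> C" "V.independent W" "C \<subseteq> V.span W" "card W = V.dim C"
    by (rule V.basis_exists)
  have "V.span W = C" using W(1,3) assms(1) by (intro V.span_subspace) (auto simp: linear_code_def)
  moreover have "finite W" using W(1) \<open>finite C\<close> by (rule finite_subset)
  ultimately show "card C \<le> card (UNIV :: 'F set) ^ V.dim C"
    using V.card_span_le[OF finite_UNIV, of W] W(4) by simp
qed

lemma linear_code_supp_subset: "linear_code P {f :: 'a \<Rightarrow> 'F::field. supp f \<subseteq> P}"
  unfolding linear_code_def
proof
  interpret V: vector_space "fscale :: 'F \<Rightarrow> ('a \<Rightarrow> 'F) \<Rightarrow> ('a \<Rightarrow> 'F)" by (rule vector_space_fscale)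
  show "V.subspace {f. supp f \<subseteq> P}"
    by (rule V.subspaceI) (auto simp: supp_def fscale_def subset_iff, metis add.right_neutral)
qed simp

lemma supp_indicator: "supp (\<lambda>x. if x \<in> b then 1 else 0 :: 'F::zero_neq_one) = b"
  unfolding supp_def by simp

lemma design_dim_attained:
  assumes "\<forall>b\<in>B. b \<subseteq> P"
  obtains C :: "('a \<Rightarrow> 'F::field) set"
  where "linear_code P C" and "vector_space.dim fscale C = design_dim TYPE('F) P B"
    and "\<forall>b\<in>B. \<exists>c\<in>C. supp c = b"
proof -
  let ?Q = "\<lambda>d. \<exists>C :: ('a \<Rightarrow> 'F) set. linear_code P C \<and>
      vector_space.dim fscale C = d \<and> (\<forall>b\<in>B. \<exists>c\<in>C. supp c = b)"
  have "\<forall>b\<in>B. \<exists>c\<in>{f :: 'a \<Rightarrow> 'F. supp f \<subseteq> P}. supp c = b"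
  proof
    fix b assume "b \<in> B"
    then show "\<exists>c\<in>{f :: 'a \<Rightarrow> 'F. supp f \<subseteq> P}. supp c = b"
      using assms supp_indicator[of b] by (intro bexI[of _ "\<lambda>x. if x \<in> b then 1 else 0"]) auto
  qed
  then have "?Q (vector_space.dim fscale {f :: 'a \<Rightarrow> 'F. supp f \<subseteq> P})"
    using linear_code_supp_subset by blast
  then have "?Q (design_dim TYPE('F) P B)" unfolding design_dim_def by (rule LeastI)
  then show ?thesis using that by blast
qed

lemma supp_fscale:
  fixes c :: "'a \<Rightarrow> 'F::field"
  assumes "a \<noteq> 0"
  shows "supp (fscale a c) = supp c"
  using assms unfolding supp_def fscale_def by simp

lemma card_supports_lt:
  fixes C :: "('a \<Rightarrow> 'F::{finite,field}) set"
  assumes "module.subspace fscale C" and "finite C"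
    and "\<forall>b\<in>B. \<exists>c\<in>C. supp c = b" and "{} \<notin> B"
  shows "card B * (card (UNIV :: 'F set) - 1) < card C"
proof -
  interpret V: vector_space "fscale :: 'F \<Rightarrow> ('a \<Rightarrow> 'F) \<Rightarrow> ('a \<Rightarrow> 'F)" by (rule vector_space_fscale)
  obtain word where word: "\<And>b. b \<in> B \<Longrightarrow> word b \<in> C \<and> supp (word b) = b"
    using assms(3) by metis
  let ?f = "\<lambda>(b, a). fscale a (word b)"
  have "b = b' \<and> a = a'"
    if b: "b \<in> B" "b' \<in> B" and a: "a \<noteq> 0" "a' \<noteq> 0"
      and eq: "fscale a (word b) = fscale a' (word b')" for b b' and a a' :: 'F
  proof -
    have "b = b'" using arg_cong[OF eq, of supp] word b a by (simp add: supp_fscale)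
    moreover obtain x where "word b x \<noteq> 0"
      using word[OF b(1)] assms(4) b(1) unfolding supp_def by fastforce
    ultimately show ?thesis using fun_cong[OF eq, of x] by (simp add: fscale_def)
  qed
  then have "inj_on ?f (B \<times> (UNIV - {0}))" by (auto intro!: inj_onI)
  moreover have "fscale a (word b) \<in> C - {0}" if "b \<in> B" "a \<noteq> 0" for b and a :: 'F
  proof -
    have "fscale a (word b) \<in> C" "supp (fscale a (word b)) \<noteq> {}"
      using that word V.subspace_scale[OF assms(1)] assms(4) by (auto simp: supp_fscale)
    then show ?thesis by (auto simp: supp_def)
  qed
  then have "?f ` (B \<times> (UNIV - {0})) \<subseteq> C - {0}" by auto
  ultimately have "card (B \<times> (UNIV - {0 :: 'F})) \<le> card (C - {0})"
    using assms(2) by (intro card_inj_on_le) auto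
  moreover have "0 \<in> C" using V.subspace_0[OF assms(1)] .
  ultimately have "card B * (card (UNIV :: 'F set) - 1) \<le> card C - 1"
    by (simp add: card_cartesian_product card_Diff_singleton)
  moreover have "card C > 0" using \<open>0 \<in> C\<close> assms(2) by (auto simp: card_gt_0_iff)
  ultimately show ?thesis by linarith
qed

lemma card_blocks_lt_power_design_dim:
  assumes "finite P" and "\<forall>b\<in>B. b \<subseteq> P" and "{} \<notin> B"
  shows "card B * (card (UNIV :: 'F::{finite,field} set) - 1)
           < card (UNIV :: 'F set) ^ design_dim TYPE('F) P B"
proof -
  obtain C :: "('a \<Rightarrow> 'F) set" where C: "linear_code P C"
    "vector_space.dim fscale C = design_dim TYPE('F) P B" "\<forall>b\<in>B. \<exists>c\<in>C. supp c = b"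
    using design_dim_attained assms(2) by blast
  have "card B * (card (UNIV :: 'F set) - 1) < card C"
    using C card_linear_code_le(1)[OF C(1) assms(1)] assms(3)
    by (intro card_supports_lt) (auto simp: linear_code_def)
  also have "\<dots> \<le> card (UNIV :: 'F set) ^ design_dim TYPE('F) P B"
    using card_linear_code_le(2)[OF C(1) assms(1)] C(2) by simp
  finally show ?thesis .
qed

lemma sixty_mul_cube_lt:
  fixes q :: nat
  assumes "q > 63"
  shows "60 * q ^ 3 < (q + 1) * q * (q - 1) * (q - 1)"
proof -
  obtain r where q: "q = r + 64" using assms by (intro that[of "q - 64"]) simp
  show ?thesis unfolding q by (simp add: algebra_simps power3_eq_cube)
qed

theorem theorem30:
  fixes P :: "'a set" and B :: "'a set set" and q lam :: nat
  assumes "card (UNIV :: 'F::{finite,field} set) = q"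
    and "q > 63"
    and "60 * lam = (q - 4) * (q - 5) * (q - 6)"
    and "is_design 3 (q + 1) (q - 4) lam P B"
  shows "design_dim TYPE('F) P B \<ge> 4"
proof (rule ccontr)
  assume "\<not> design_dim TYPE('F) P B \<ge> 4"
  then have dim: "q ^ design_dim TYPE('F) P B \<le> q ^ 3"
    using assms(2) by (intro power_increasing) auto
  have "finite P" and "\<forall>b\<in>B. b \<subseteq> P" and "{} \<notin> B"
    using assms(2,4) unfolding is_design_def by auto
  then have "card B * (q - 1) < q ^ 3"
    using card_blocks_lt_power_design_dim[where 'F='F] assms(1) dim by fastforce
  then have "60 * card B * (q - 1) < 60 * q ^ 3" by simp
  then show False
    using design_3_card_blocks[OF assms(4,3)] sixty_mul_cube_lt[OF assms(2)] by simp
qed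

end
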